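(* Let $1<p<\infty$. Then, for any $f\in L^p(0,\infty)$, $$ \int_0^\infty \sup_{0<s<\infty} \left| \min\left\{ \frac1r,\frac1s \right\} \int_0^s f(t)\,dt \right|^p dr \leq \left( \frac{p}{p-1}\right)^p \int_0^\infty |f(r)|^p\,dr \,. $$ *)

theory Defs
  imports "HOL-Analysis.Analysis"
begin

end

theory Submission
  imports Defs
begin

(* Write Phi(s) for the integral of |f| over (0, s] and G(r) = sup_s min(1/r, 1/s) Phi(s) for
   the majorant of the integrand (hardy_majorant). G is nonincreasing, and every point r of a
   superlevel set {G > mu} lies below some s in the same set with Phi(s) > mu s; since (0, s] is
   contained in {G > mu}, this gives the weak-type estimate
     mu * |{G > mu}| <= integral of |f| over {G > mu}.
   Such an estimate implies the strong bound with constant (p/(p-1))^p: the layer-cake formula and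
   Tonelli give  int G^p <= p/(p-1) int |f| G^(p-1),  and Young's inequality bounds the right-hand
   side by (p/(p-1))^p/p int |f|^p + (p-1)/p int G^p, whose last term is absorbed on the left.
   The absorption needs int G^p < oo, so it is done first for truncations of G, which are bounded
   and vanish outside a superlevel set of G; these sets have finite measure because Phi(s) = o(s)
   for f in L^p. Fatou's lemma then removes the truncation. *)

lemma nn_integral_powr_interval:
  fixes q a :: real
  assumes q: "0 < q" and a: "0 \<le> a"
  shows "(\<integral>\<^sup>+l\<in>{0<..<a}. ennreal (l powr (q - 1)) \<partial>lborel) = ennreal (a powr q / q)"
proof -
  have "((\<lambda>l. l powr (q - 1)) has_integral (a powr q / q - 0 powr q / q)) {0..a}"
  proof (rule fundamental_theorem_of_calculus_interior[OF a])
    show "continuous_on {0..a} (\<lambda>l. l powr q / q)"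
      by (intro continuous_on_divide continuous_on_powr') (use q in \<open>auto intro: continuous_intros\<close>)
    fix x assume "x \<in> {0<..<a}"
    then show "((\<lambda>l. l powr q / q) has_vector_derivative x powr (q - 1)) (at x)"
      using q by (auto simp: has_real_derivative_iff_has_vector_derivative[symmetric]
          intro!: derivative_eq_intros)
  qed
  then have "((\<lambda>l. l powr (q - 1)) has_integral (a powr q / q)) {0<..<a}"
    using q by (simp add: has_integral_Icc_iff_Ioo)
  then show ?thesis
    by (rule nn_integral_has_integral_lebesgue'[rotated]) simp
qed

lemma Youngs_inequality_powr_conjugate:
  fixes p a b :: real
  assumes p: "1 < p" and a: "0 \<le> a" and b: "0 \<le> b"
  shows "a * b powr (p - 1) \<le> a powr p / p + (p - 1) / p * b powr p"
proof -
  have q: "1 < p / (p - 1)" and pq: "1 / p + 1 / (p / (p - 1)) = 1"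
    using p by (simp_all add: field_simps)
  have "a * b powr (p - 1) \<le> a powr p / p + (b powr (p - 1)) powr (p / (p - 1)) / (p / (p - 1))"
    using Youngs_inequality[OF p q pq a] b by simp
  also have "(b powr (p - 1)) powr (p / (p - 1)) = b powr p"
    using p by (simp add: powr_powr)
  finally show ?thesis by (simp add: mult.commute)
qed

lemma le_add_scaled_powr:
  fixes p d y :: real
  assumes p: "1 < p" and d: "0 < d"
  shows "y \<le> d + d powr (1 - p) * y powr p"
proof (cases "y \<le> d")
  case True
  then show ?thesis by (simp add: add_increasing2)
next
  case False
  then have "d powr (1 - p) * (d powr (p - 1) * y) \<le> d powr (1 - p) * (y powr (p - 1) * y)"
    using d p by (intro mult_left_mono mult_right_mono powr_mono2) auto
  moreover have "d powr (1 - p) * (d powr (p - 1) * y) = y"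
    using d by (simp add: powr_add[symmetric])
  moreover have "y powr (p - 1) * y = y powr p"
    using False d by (simp add: powr_diff)
  ultimately show ?thesis
    using d by simp
qed

lemma ennreal_absorb_le:
  fixes A X :: ennreal and t :: real
  assumes le: "A \<le> X + ennreal t * A" and fin: "A \<noteq> \<infinity>" and t: "0 \<le> t" "t < 1"
  shows "ennreal (1 - t) * A \<le> X"
proof (cases X)
  case (real x)
  obtain a where a: "A = ennreal a" "0 \<le> a"
    using fin by (cases A) auto
  have "ennreal a \<le> ennreal (x + t * a)"
    using le real a t by (simp add: ennreal_mult ennreal_plus)
  then have "a \<le> x + t * a"
    using real a t by (subst (asm) ennreal_le_iff) auto
  then have "(1 - t) * a \<le> x"
    by (simp add: algebra_simps)
  then show ?thesis
    using real a t by (simp add: ennreal_mult[symmetric])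
qed simp

lemma norm_set_integral_le_set_nn_integral:
  fixes f :: "'a \<Rightarrow> 'b::{banach, second_countable_topology}"
  shows "ennreal (norm (set_lebesgue_integral M A f)) \<le> (\<integral>\<^sup>+x\<in>A. ennreal (norm (f x)) \<partial>M)"
proof (cases "set_integrable M A f")
  case True
  have "ennreal (norm (set_lebesgue_integral M A f)) \<le> (\<integral>\<^sup>+x. ennreal (norm (indicator A x *\<^sub>R f x)) \<partial>M)"
    using True unfolding set_lebesgue_integral_def set_integrable_def by (rule integral_norm_bound_ennreal)
  also have "\<dots> = (\<integral>\<^sup>+x\<in>A. ennreal (norm (f x)) \<partial>M)"
    by (intro nn_integral_cong) (simp add: indicator_def)
  finally show ?thesis .
next
  case False
  then show ?thesis
    by (simp add: set_lebesgue_integral_def set_integrable_def not_integrable_integral_eq)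
qed

lemma set_nn_integral_Ioc_le_linear:
  fixes g :: "real \<Rightarrow> real" and p d s :: real
  assumes p: "1 < p" and d: "0 < d" and s: "0 \<le> s" and [measurable]: "g \<in> borel_measurable borel"
  shows "(\<integral>\<^sup>+t\<in>{0<..s}. ennreal (g t) \<partial>lborel)
    \<le> ennreal (d * s) + ennreal (d powr (1 - p)) * (\<integral>\<^sup>+t. ennreal (g t powr p) \<partial>lborel)"
proof -
  have "(\<integral>\<^sup>+t\<in>{0<..s}. ennreal (g t) \<partial>lborel)
      \<le> (\<integral>\<^sup>+t. ennreal d * indicator {0<..s} t + ennreal (d powr (1 - p)) * ennreal (g t powr p) \<partial>lborel)"
  proof (intro nn_integral_mono)
    fix t
    have "ennreal (g t) \<le> ennreal (d + d powr (1 - p) * g t powr p)"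
      by (intro ennreal_leI le_add_scaled_powr[OF p d])
    also have "\<dots> = ennreal d + ennreal (d powr (1 - p) * g t powr p)"
      using d by (intro ennreal_plus) auto
    also have "\<dots> = ennreal d + ennreal (d powr (1 - p)) * ennreal (g t powr p)"
      by (simp add: ennreal_mult)
    finally have "ennreal (g t) \<le> ennreal d + ennreal (d powr (1 - p)) * ennreal (g t powr p)" .
    then show "ennreal (g t) * indicator {0<..s} t
        \<le> ennreal d * indicator {0<..s} t + ennreal (d powr (1 - p)) * ennreal (g t powr p)"
      by (cases "t \<in> {0<..s}") auto
  qed
  also have "\<dots> = ennreal (d * s) + ennreal (d powr (1 - p)) * (\<integral>\<^sup>+t. ennreal (g t powr p) \<partial>lborel)"
    using d s by (simp add: nn_integral_add nn_integral_cmult ennreal_mult)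
  finally show ?thesis .
qed

lemma nn_integral_layer_cake_powr:
  fixes M :: "'a measure" and H :: "'a \<Rightarrow> real" and w :: "'a \<Rightarrow> ennreal" and q :: real
  assumes M: "sigma_finite_measure M" and q: "0 < q"
    and [measurable]: "H \<in> borel_measurable M" "w \<in> borel_measurable M" and H_nonneg: "\<And>x. 0 \<le> H x"
  shows "(\<integral>\<^sup>+x. w x * ennreal (H x powr q) \<partial>M)
    = ennreal q * (\<integral>\<^sup>+l\<in>{0<..}. ennreal (l powr (q - 1)) * (\<integral>\<^sup>+x\<in>{x\<in>space M. l < H x}. w x \<partial>M) \<partial>lborel)"
proof -
  interpret pair_sigma_finite M lborel
    by (intro pair_sigma_finite.intro M lborel.sigma_finite_measure_axioms)
  have [measurable]: "(\<lambda>(x, l). indicator {0<..<H x} l :: ennreal) \<in> borel_measurable (M \<Otimes>\<^sub>M lborel)"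
    unfolding indicator_def greaterThanLessThan_iff by measurable
  have "ennreal (H x powr q) = ennreal q * (\<integral>\<^sup>+l\<in>{0<..<H x}. ennreal (l powr (q - 1)) \<partial>lborel)" for x
    using q H_nonneg[of x] by (simp add: nn_integral_powr_interval flip: ennreal_mult)
  then have "w x * ennreal (H x powr q)
      = ennreal q * (\<integral>\<^sup>+l. w x * (ennreal (l powr (q - 1)) * indicator {0<..<H x} l) \<partial>lborel)" for x
    by (simp add: nn_integral_cmult mult.left_commute)
  then have "(\<integral>\<^sup>+x. w x * ennreal (H x powr q) \<partial>M)
      = ennreal q * (\<integral>\<^sup>+x. \<integral>\<^sup>+l. w x * (ennreal (l powr (q - 1)) * indicator {0<..<H x} l) \<partial>lborel \<partial>M)"
    by (simp add: nn_integral_cmult)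
  also have "\<dots> = ennreal q * (\<integral>\<^sup>+l. \<integral>\<^sup>+x. w x * (ennreal (l powr (q - 1)) * indicator {0<..<H x} l) \<partial>M \<partial>lborel)"
    by (subst Fubini') simp_all
  also have "\<dots> = ennreal q * (\<integral>\<^sup>+l\<in>{0<..}. ennreal (l powr (q - 1)) * (\<integral>\<^sup>+x\<in>{x\<in>space M. l < H x}. w x \<partial>M) \<partial>lborel)"
  proof (intro arg_cong[where f="(*) (ennreal q)"] nn_integral_cong)
    fix l :: real
    show "(\<integral>\<^sup>+x. w x * (ennreal (l powr (q - 1)) * indicator {0<..<H x} l) \<partial>M)
        = ennreal (l powr (q - 1)) * (\<integral>\<^sup>+x\<in>{x\<in>space M. l < H x}. w x \<partial>M) * indicator {0<..} l"
      by (cases "0 < l") (auto simp: nn_integral_cmult[symmetric] indicator_def mult_ac intro!: nn_integral_cong)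
  qed
  finally show ?thesis .
qed

lemma nn_integral_powr_le_weak_type:
  fixes M :: "'a measure" and H g :: "'a \<Rightarrow> real" and p :: real
  assumes M: "sigma_finite_measure M" and p: "1 < p"
    and [measurable]: "H \<in> borel_measurable M" "g \<in> borel_measurable M"
    and H_nonneg: "\<And>x. 0 \<le> H x" and g_nonneg: "\<And>x. 0 \<le> g x"
    and weak: "\<And>t. 0 < t \<Longrightarrow>
      ennreal t * emeasure M {x\<in>space M. t < H x} \<le> (\<integral>\<^sup>+x\<in>{x\<in>space M. t < H x}. ennreal (g x) \<partial>M)"
  shows "(\<integral>\<^sup>+x. ennreal (H x powr p) \<partial>M)
    \<le> ennreal (p / (p - 1)) * (\<integral>\<^sup>+x. ennreal (g x * H x powr (p - 1)) \<partial>M)"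
proof -
  have "(\<integral>\<^sup>+x. ennreal (H x powr p) \<partial>M)
      = ennreal p * (\<integral>\<^sup>+l\<in>{0<..}. ennreal (l powr (p - 1)) * emeasure M {x\<in>space M. l < H x} \<partial>lborel)"
    using nn_integral_layer_cake_powr[OF M _ _ _ H_nonneg, where q = p and w = "\<lambda>_. 1"] p by simp
  also have "\<dots> \<le> ennreal p * (\<integral>\<^sup>+l\<in>{0<..}. ennreal (l powr (p - 2)) * (\<integral>\<^sup>+x\<in>{x\<in>space M. l < H x}. ennreal (g x) \<partial>M) \<partial>lborel)"
  proof (intro mult_left_mono nn_integral_mono)
    fix l :: real
    have "ennreal (l powr (p - 1)) * emeasure M {x\<in>space M. l < H x}
        \<le> ennreal (l powr (p - 2)) * (\<integral>\<^sup>+x\<in>{x\<in>space M. l < H x}. ennreal (g x) \<partial>M)" if "0 < l"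
    proof -
      have "l powr (p - 1) = l powr (p - 2) * l"
        using that by (simp add: powr_diff field_simps power2_eq_square)
      then show ?thesis
        using that by (simp add: ennreal_mult mult.assoc mult_left_mono weak)
    qed
    then show "ennreal (l powr (p - 1)) * emeasure M {x\<in>space M. l < H x} * indicator {0<..} l
        \<le> ennreal (l powr (p - 2)) * (\<integral>\<^sup>+x\<in>{x\<in>space M. l < H x}. ennreal (g x) \<partial>M) * indicator {0<..} l"
      by (cases "0 < l") auto
  qed simp
  also have "\<dots> = ennreal (p / (p - 1)) * (ennreal (p - 1) *
      (\<integral>\<^sup>+l\<in>{0<..}. ennreal (l powr (p - 1 - 1)) * (\<integral>\<^sup>+x\<in>{x\<in>space M. l < H x}. ennreal (g x) \<partial>M) \<partial>lborel))"
    using p by (simp add: mult.assoc[symmetric] ennreal_mult[symmetric])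
  also have "\<dots> = ennreal (p / (p - 1)) * (\<integral>\<^sup>+x. ennreal (g x) * ennreal (H x powr (p - 1)) \<partial>M)"
    using p by (subst nn_integral_layer_cake_powr[OF M _ _ _ H_nonneg]) simp_all
  also have "\<dots> = ennreal (p / (p - 1)) * (\<integral>\<^sup>+x. ennreal (g x * H x powr (p - 1)) \<partial>M)"
    using g_nonneg by (simp add: ennreal_mult)
  finally show ?thesis .
qed

lemma nn_integral_Youngs_inequality_powr_conjugate:
  fixes M :: "'a measure" and H g :: "'a \<Rightarrow> real" and p :: real
  assumes p: "1 < p" and [measurable]: "H \<in> borel_measurable M" "g \<in> borel_measurable M"
    and H_nonneg: "\<And>x. 0 \<le> H x" and g_nonneg: "\<And>x. 0 \<le> g x"
  shows "ennreal (p / (p - 1)) * (\<integral>\<^sup>+x. ennreal (g x * H x powr (p - 1)) \<partial>M)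
    \<le> ennreal ((p / (p - 1)) powr p / p) * (\<integral>\<^sup>+x. ennreal (g x powr p) \<partial>M)
      + ennreal ((p - 1) / p) * (\<integral>\<^sup>+x. ennreal (H x powr p) \<partial>M)"
proof -
  define c where "c = (p / (p - 1)) powr p / p"
  have c: "0 \<le> c"
    using p by (simp add: c_def)
  have young: "ennreal (p / (p - 1)) * ennreal (g x * H x powr (p - 1))
      \<le> ennreal c * ennreal (g x powr p) + ennreal ((p - 1) / p) * ennreal (H x powr p)" for x
  proof -
    have "(p / (p - 1) * g x) powr p = (p / (p - 1)) powr p * g x powr p"
      using p g_nonneg[of x] by (intro powr_mult)
    then have real_young: "p / (p - 1) * (g x * H x powr (p - 1)) \<le> c * g x powr p + (p - 1) / p * H x powr p"
      using Youngs_inequality_powr_conjugate[OF p _ H_nonneg[of x], of "p / (p - 1) * g x"] p g_nonneg[of x]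
      by (simp add: c_def)
    have "ennreal (p / (p - 1)) * ennreal (g x * H x powr (p - 1)) = ennreal (p / (p - 1) * (g x * H x powr (p - 1)))"
      using p by (intro ennreal_mult'[symmetric]) simp
    also have "\<dots> \<le> ennreal (c * g x powr p + (p - 1) / p * H x powr p)"
      using real_young by (rule ennreal_leI)
    also have "\<dots> = ennreal (c * g x powr p) + ennreal ((p - 1) / p * H x powr p)"
      using p c by (intro ennreal_plus) auto
    also have "\<dots> = ennreal c * ennreal (g x powr p) + ennreal ((p - 1) / p) * ennreal (H x powr p)"
      using p c by (intro arg_cong2[where f="(+)"] ennreal_mult') auto
    finally show ?thesis .
  qed
  have "ennreal (p / (p - 1)) * (\<integral>\<^sup>+x. ennreal (g x * H x powr (p - 1)) \<partial>M)
      \<le> (\<integral>\<^sup>+x. ennreal c * ennreal (g x powr p) + ennreal ((p - 1) / p) * ennreal (H x powr p) \<partial>M)"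
    by (subst nn_integral_cmult[symmetric]) (auto intro: nn_integral_mono young)
  also have "\<dots> = ennreal c * (\<integral>\<^sup>+x. ennreal (g x powr p) \<partial>M) + ennreal ((p - 1) / p) * (\<integral>\<^sup>+x. ennreal (H x powr p) \<partial>M)"
    by (simp add: nn_integral_add nn_integral_cmult)
  finally show ?thesis
    unfolding c_def .
qed

lemma nn_integral_powr_le_of_weak_type_finite:
  fixes M :: "'a measure" and H g :: "'a \<Rightarrow> real" and p :: real
  assumes M: "sigma_finite_measure M" and p: "1 < p"
    and [measurable]: "H \<in> borel_measurable M" "g \<in> borel_measurable M"
    and H_nonneg: "\<And>x. 0 \<le> H x" and g_nonneg: "\<And>x. 0 \<le> g x"
    and weak: "\<And>t. 0 < t \<Longrightarrow>
      ennreal t * emeasure M {x\<in>space M. t < H x} \<le> (\<integral>\<^sup>+x\<in>{x\<in>space M. t < H x}. ennreal (g x) \<partial>M)"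
    and finite: "(\<integral>\<^sup>+x. ennreal (H x powr p) \<partial>M) < \<infinity>"
  shows "(\<integral>\<^sup>+x. ennreal (H x powr p) \<partial>M)
    \<le> ennreal ((p / (p - 1)) powr p) * (\<integral>\<^sup>+x. ennreal (g x powr p) \<partial>M)"
proof -
  define A where "A = (\<integral>\<^sup>+x. ennreal (H x powr p) \<partial>M)"
  define B where "B = (\<integral>\<^sup>+x. ennreal (g x powr p) \<partial>M)"
  define c where "c = (p / (p - 1)) powr p"
  have "A \<le> ennreal (p / (p - 1)) * (\<integral>\<^sup>+x. ennreal (g x * H x powr (p - 1)) \<partial>M)"
    unfolding A_def by (rule nn_integral_powr_le_weak_type[OF M p _ _ H_nonneg g_nonneg weak]) simp_all
  also have "\<dots> \<le> ennreal (c / p) * B + ennreal ((p - 1) / p) * A"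
    unfolding A_def B_def c_def
    by (rule nn_integral_Youngs_inequality_powr_conjugate[OF p _ _ H_nonneg g_nonneg]) simp_all
  finally have "ennreal (1 - (p - 1) / p) * A \<le> ennreal (c / p) * B"
    by (rule ennreal_absorb_le) (use finite p in \<open>simp_all add: A_def\<close>)
  moreover have "1 - (p - 1) / p = 1 / p"
    using p by (simp add: field_simps)
  ultimately have "ennreal p * (ennreal (1 / p) * A) \<le> ennreal p * (ennreal (c / p) * B)"
    by (intro mult_left_mono) simp_all
  moreover have "ennreal p * ennreal (1 / p) = 1" "ennreal p * ennreal (c / p) = ennreal c"
    using p by (simp_all add: c_def flip: ennreal_mult)
  ultimately show ?thesis
    by (simp add: A_def B_def c_def mult.assoc[symmetric])
qed

definition level_truncation :: "nat \<Rightarrow> ('a \<Rightarrow> real) \<Rightarrow> 'a \<Rightarrow> real" where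
  "level_truncation n H x = (if 1 / Suc n < H x then min (H x) (real n) else 0)"

lemma level_truncation_measurable[measurable]:
  assumes [measurable]: "H \<in> borel_measurable M"
  shows "level_truncation n H \<in> borel_measurable M"
  unfolding level_truncation_def by measurable

lemma level_truncation_nonneg: "(\<And>x. 0 \<le> H x) \<Longrightarrow> 0 \<le> level_truncation n H x"
  by (simp add: level_truncation_def)

lemma level_truncation_eventually_eq:
  assumes "0 < H x"
  shows "\<forall>\<^sub>F n in sequentially. level_truncation n H x = H x"
proof -
  obtain N :: nat where N: "max (H x) (1 / H x) \<le> N"
    using real_arch_simple by blast
  show ?thesis
  proof (rule eventually_sequentiallyI[of N])
    fix n assume "N \<le> n"
    then have "H x \<le> n" "1 / H x < Suc n"
      using N by linarith+
    then show "level_truncation n H x = H x"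
      using assms by (simp add: level_truncation_def field_simps)
  qed
qed

lemma superlevel_level_truncation:
  assumes "0 < t"
  shows "{x\<in>space M. t < level_truncation n H x}
    = (if t < n then {x\<in>space M. max t (1 / Suc n) < H x} else {})"
  using assms by (auto simp: level_truncation_def)

lemma weak_type_level_truncation:
  assumes weak: "\<And>t. 0 < t \<Longrightarrow>
      ennreal t * emeasure M {x\<in>space M. t < H x} \<le> (\<integral>\<^sup>+x\<in>{x\<in>space M. t < H x}. g x \<partial>M)"
    and t: "0 < t"
  shows "ennreal t * emeasure M {x\<in>space M. t < level_truncation n H x}
    \<le> (\<integral>\<^sup>+x\<in>{x\<in>space M. t < level_truncation n H x}. g x \<partial>M)"
proof (cases "t < n")
  case True
  define s where "s = max t (1 / Suc n)"
  have s: "0 < s" "t \<le> s"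
    using t by (auto simp: s_def)
  have "ennreal t * emeasure M {x\<in>space M. s < H x} \<le> ennreal s * emeasure M {x\<in>space M. s < H x}"
    using s by (intro mult_right_mono ennreal_leI) auto
  also have "\<dots> \<le> (\<integral>\<^sup>+x\<in>{x\<in>space M. s < H x}. g x \<partial>M)"
    using s by (intro weak)
  finally show ?thesis
    using True by (simp add: superlevel_level_truncation[OF t] s_def)
qed (simp add: superlevel_level_truncation[OF t])

lemma nn_integral_level_truncation_powr_finite:
  assumes [measurable]: "H \<in> borel_measurable M" and H_nonneg: "\<And>x. 0 \<le> H x" and p: "0 \<le> p"
    and finite: "emeasure M {x\<in>space M. 1 / Suc n < H x} < \<infinity>"
  shows "(\<integral>\<^sup>+x. ennreal (level_truncation n H x powr p) \<partial>M) < \<infinity>"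
proof -
  have "(\<integral>\<^sup>+x. ennreal (level_truncation n H x powr p) \<partial>M)
      \<le> (\<integral>\<^sup>+x. ennreal (real n powr p) * indicator {x\<in>space M. 1 / Suc n < H x} x \<partial>M)"
    using p H_nonneg
    by (intro nn_integral_mono) (auto simp: level_truncation_def indicator_def intro!: ennreal_leI powr_mono2)
  also have "\<dots> = ennreal (real n powr p) * emeasure M {x\<in>space M. 1 / Suc n < H x}"
    by (rule nn_integral_cmult_indicator) measurable
  also have "\<dots> < \<infinity>"
    using finite by (simp add: ennreal_mult_less_top)
  finally show ?thesis .
qed

lemma nn_integral_powr_le_of_weak_type:
  fixes M :: "'a measure" and H g :: "'a \<Rightarrow> real" and p :: real
  assumes M: "sigma_finite_measure M" and p: "1 < p"
    and [measurable]: "H \<in> borel_measurable M" "g \<in> borel_measurable M"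
    and H_nonneg: "\<And>x. 0 \<le> H x" and g_nonneg: "\<And>x. 0 \<le> g x"
    and weak: "\<And>t. 0 < t \<Longrightarrow>
      ennreal t * emeasure M {x\<in>space M. t < H x} \<le> (\<integral>\<^sup>+x\<in>{x\<in>space M. t < H x}. ennreal (g x) \<partial>M)"
    and level_finite: "\<And>t. 0 < t \<Longrightarrow> emeasure M {x\<in>space M. t < H x} < \<infinity>"
  shows "(\<integral>\<^sup>+x. ennreal (H x powr p) \<partial>M)
    \<le> ennreal ((p / (p - 1)) powr p) * (\<integral>\<^sup>+x. ennreal (g x powr p) \<partial>M)"
proof -
  let ?T = "\<lambda>n. level_truncation n H"
  have bound: "(\<integral>\<^sup>+x. ennreal (?T n x powr p) \<partial>M) \<le> ennreal ((p / (p - 1)) powr p) * (\<integral>\<^sup>+x. ennreal (g x powr p) \<partial>M)" for n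
    using p H_nonneg level_finite
    by (intro nn_integral_powr_le_of_weak_type_finite[OF M p _ _ _ g_nonneg] weak_type_level_truncation
        weak level_truncation_nonneg nn_integral_level_truncation_powr_finite) simp_all
  have "ennreal (H x powr p) \<le> liminf (\<lambda>n. ennreal (?T n x powr p))" for x
  proof (cases "H x = 0")
    case False
    then show ?thesis
      using H_nonneg[of x] level_truncation_eventually_eq[of H x]
      by (intro Liminf_bounded) (auto elim!: eventually_mono)
  qed simp
  then have "(\<integral>\<^sup>+x. ennreal (H x powr p) \<partial>M) \<le> (\<integral>\<^sup>+x. liminf (\<lambda>n. ennreal (?T n x powr p)) \<partial>M)"
    by (intro nn_integral_mono)
  also have "\<dots> \<le> liminf (\<lambda>n. \<integral>\<^sup>+x. ennreal (?T n x powr p) \<partial>M)"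
    by (rule nn_integral_liminf) simp
  also have "\<dots> \<le> ennreal ((p / (p - 1)) powr p) * (\<integral>\<^sup>+x. ennreal (g x powr p) \<partial>M)"
    using bound by (intro Liminf_le) simp_all
  finally show ?thesis .
qed

definition hardy_majorant :: "(real \<Rightarrow> real) \<Rightarrow> real \<Rightarrow> ennreal" where
  "hardy_majorant g r =
    (SUP s\<in>{0<..}. ennreal (min (1 / r) (1 / s)) * (\<integral>\<^sup>+t\<in>{0<..s}. ennreal (g t) \<partial>lborel))"

lemma hardy_majorant_upper:
  "0 < s \<Longrightarrow> ennreal (min (1 / r) (1 / s)) * (\<integral>\<^sup>+t\<in>{0<..s}. ennreal (g t) \<partial>lborel) \<le> hardy_majorant g r"
  unfolding hardy_majorant_def by (rule SUP_upper) simp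

lemma hardy_majorant_nonpos:
  assumes "r \<le> 0"
  shows "hardy_majorant g r = 0"
proof -
  have "ennreal (min (1 / r) (1 / s)) = 0" for s
    using assms by (simp add: ennreal_eq_0_iff min_le_iff_disj)
  then show ?thesis
    by (simp add: hardy_majorant_def)
qed

lemma hardy_majorant_antimono: "0 < r \<Longrightarrow> r \<le> r' \<Longrightarrow> hardy_majorant g r' \<le> hardy_majorant g r"
  unfolding hardy_majorant_def
  by (intro SUP_mono' mult_right_mono ennreal_leI) (auto simp: min_def divide_simps)

lemma hardy_majorant_borel_measurable: "hardy_majorant g \<in> borel_measurable borel"
proof (rule borel_measurableI_greater)
  fix a :: ennreal
  have "is_interval {r. a < hardy_majorant g r}"
    unfolding is_interval_1
  proof (intro ballI allI impI)
    fix u v r assume "u \<in> {r. a < hardy_majorant g r}" "v \<in> {r. a < hardy_majorant g r}" "u \<le> r \<and> r \<le> v"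
    then show "r \<in> {r. a < hardy_majorant g r}"
      using hardy_majorant_antimono[of r v g] hardy_majorant_nonpos[of u g] by (cases "0 < r") auto
  qed
  then show "{r \<in> space borel. a < hardy_majorant g r} \<in> sets borel"
    by (simp add: real_interval_borel_measurable)
qed

lemma hardy_majorant_level_witness:
  assumes r: "0 < r" and less: "ennreal \<mu> < hardy_majorant g r"
  shows "\<exists>s\<ge>r. ennreal \<mu> < hardy_majorant g s \<and> ennreal (\<mu> * s) < (\<integral>\<^sup>+t\<in>{0<..s}. ennreal (g t) \<partial>lborel)"
proof -
  define \<Phi> where "\<Phi> s = (\<integral>\<^sup>+t\<in>{0<..s}. ennreal (g t) \<partial>lborel)" for s
  have mean_less: "ennreal (\<mu> * s) < \<Phi> s'" if "0 < s" "ennreal \<mu> < ennreal (1 / s) * \<Phi> s'" for s s'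
  proof -
    have "ennreal (\<mu> * s) = ennreal \<mu> * ennreal s"
      using \<open>0 < s\<close> by (simp add: ennreal_mult'')
    also have "\<dots> < ennreal (1 / s) * \<Phi> s' * ennreal s"
      using that by (intro ennreal_mult_strict_right_mono) auto
    also have "\<dots> = ennreal (1 / s) * ennreal s * \<Phi> s'"
      by (simp only: ac_simps)
    also have "\<dots> = \<Phi> s'"
      using \<open>0 < s\<close> by (simp flip: ennreal_mult)
    finally show ?thesis .
  qed
  obtain s where s: "0 < s" and below: "ennreal \<mu> < ennreal (min (1 / r) (1 / s)) * \<Phi> s"
    using less unfolding hardy_majorant_def \<Phi>_def less_SUP_iff by auto
  show ?thesis
  proof (cases "r \<le> s")
    case True
    then have "ennreal \<mu> < ennreal (1 / s) * \<Phi> s"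
      using below r by (simp add: min_def divide_simps split: if_split_asm)
    moreover have "ennreal (1 / s) * \<Phi> s \<le> hardy_majorant g s"
      using hardy_majorant_upper[OF s, of s g] by (simp add: \<Phi>_def)
    ultimately show ?thesis
      using True s mean_less[OF s] unfolding \<Phi>_def by (meson less_le_trans)
  next
    case False
    then have "ennreal \<mu> < ennreal (1 / r) * \<Phi> s"
      using below s by (simp add: min_def divide_simps)
    also have "\<dots> \<le> ennreal (1 / r) * \<Phi> r"
      using False unfolding \<Phi>_def
      by (intro mult_left_mono nn_integral_mono) (auto simp: indicator_def)
    finally show ?thesis
      using less r mean_less[OF r] unfolding \<Phi>_def by auto
  qed
qed

lemma hardy_majorant_weak_type:
  assumes \<mu>: "0 < \<mu>"
  shows "ennreal \<mu> * emeasure lborel {r. ennreal \<mu> < hardy_majorant g r}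
    \<le> (\<integral>\<^sup>+r\<in>{r. ennreal \<mu> < hardy_majorant g r}. ennreal (g r) \<partial>lborel)"
proof -
  define S where "S = {r. ennreal \<mu> < hardy_majorant g r}"
  define I where "I = (\<integral>\<^sup>+r\<in>S. ennreal (g r) \<partial>lborel)"
  have S_pos: "0 < r" if "r \<in> S" for r
    using that hardy_majorant_nonpos[of r g] by (force simp: S_def)
  have bound: "ennreal (\<mu> * r) \<le> I" if r: "r \<in> S" for r
  proof -
    obtain s where s: "r \<le> s" "s \<in> S" and less: "ennreal (\<mu> * s) < (\<integral>\<^sup>+t\<in>{0<..s}. ennreal (g t) \<partial>lborel)"
      using hardy_majorant_level_witness[OF S_pos[OF r]] r by (auto simp: S_def)
    have "{0<..s} \<subseteq> S"
      using s hardy_majorant_antimono[of _ s g] by (auto simp: S_def intro: less_le_trans)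
    then have "(\<integral>\<^sup>+t\<in>{0<..s}. ennreal (g t) \<partial>lborel) \<le> I"
      unfolding I_def by (intro nn_integral_mono) (auto simp: indicator_def)
    moreover have "ennreal (\<mu> * r) \<le> ennreal (\<mu> * s)"
      using s \<mu> by (intro ennreal_leI) simp
    ultimately show ?thesis
      using less by order
  qed
  show ?thesis
  proof (cases I)
    case (real i)
    have "S \<subseteq> {0<..i / \<mu>}"
      using bound real \<mu> S_pos by (auto simp: field_simps)
    then have "emeasure lborel S \<le> ennreal (i / \<mu>)"
      using emeasure_mono[of S "{0<..i / \<mu>}" lborel] real \<mu> by simp
    then have "ennreal \<mu> * emeasure lborel S \<le> ennreal \<mu> * ennreal (i / \<mu>)"
      by (rule mult_left_mono) simp
    also have "\<dots> = I"
      using real \<mu> by (simp flip: ennreal_mult)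
    finally show ?thesis
      unfolding S_def I_def .
  qed (simp add: I_def S_def)
qed

context
  fixes g :: "real \<Rightarrow> real" and p :: real
  assumes p: "1 < p" and g_measurable[measurable]: "g \<in> borel_measurable borel"
    and g_Lp: "(\<integral>\<^sup>+t. ennreal (g t powr p) \<partial>lborel) < \<infinity>"
begin

lemma hardy_majorant_finite: "hardy_majorant g r < \<infinity>"
proof (cases "0 < r")
  case True
  obtain b where b: "(\<integral>\<^sup>+t. ennreal (g t powr p) \<partial>lborel) = ennreal b" "0 \<le> b"
    using g_Lp by (cases "\<integral>\<^sup>+t. ennreal (g t powr p) \<partial>lborel") auto
  have "hardy_majorant g r \<le> ennreal (1 + b / r)"
    unfolding hardy_majorant_def
  proof (rule SUP_least)
    fix s :: real assume "s \<in> {0<..}"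
    then have s: "0 < s" by simp
    define m where "m = min (1 / r) (1 / s)"
    have m: "0 \<le> m" "m * s \<le> 1" "m * b \<le> b / r"
      using True s b by (auto simp: m_def min_def field_simps intro: mult_left_mono)
    have "ennreal m * (\<integral>\<^sup>+t\<in>{0<..s}. ennreal (g t) \<partial>lborel) \<le> ennreal m * ennreal (s + b)"
      using set_nn_integral_Ioc_le_linear[OF p zero_less_one less_imp_le[OF s] g_measurable] s b
      by (intro mult_left_mono) (simp_all add: ennreal_plus)
    also have "\<dots> = ennreal (m * (s + b))"
      using m by (simp add: ennreal_mult')
    also have "\<dots> \<le> ennreal (1 + b / r)"
      using m by (intro ennreal_leI) (simp add: distrib_left)
    finally show "ennreal (min (1 / r) (1 / s)) * (\<integral>\<^sup>+t\<in>{0<..s}. ennreal (g t) \<partial>lborel) \<le> ennreal (1 + b / r)"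
      by (simp add: m_def)
  qed
  then show ?thesis
    by (rule le_less_trans) simp
qed (simp add: hardy_majorant_nonpos)

lemma emeasure_hardy_majorant_level_finite:
  assumes \<mu>: "0 < \<mu>"
  shows "emeasure lborel {r. ennreal \<mu> < hardy_majorant g r} < \<infinity>"
proof -
  obtain b where b: "(\<integral>\<^sup>+t. ennreal (g t powr p) \<partial>lborel) = ennreal b" "0 \<le> b"
    using g_Lp by (cases "\<integral>\<^sup>+t. ennreal (g t powr p) \<partial>lborel") auto
  define C where "C = (\<mu> / 2) powr (1 - p) * b"
  have "{r. ennreal \<mu> < hardy_majorant g r} \<subseteq> {0<..2 * C / \<mu>}"
  proof
    fix r assume "r \<in> {r. ennreal \<mu> < hardy_majorant g r}"
    then have r: "0 < r" "ennreal \<mu> < hardy_majorant g r"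
      using hardy_majorant_nonpos[of r g] by (force, simp)
    then obtain s where s: "r \<le> s" and less: "ennreal (\<mu> * s) < (\<integral>\<^sup>+t\<in>{0<..s}. ennreal (g t) \<partial>lborel)"
      using hardy_majorant_level_witness by blast
    have "(\<integral>\<^sup>+t\<in>{0<..s}. ennreal (g t) \<partial>lborel) \<le> ennreal (\<mu> / 2 * s + C)"
      using set_nn_integral_Ioc_le_linear[OF p _ _ g_measurable, of "\<mu> / 2" s] \<mu> r s b
      by (simp add: C_def ennreal_plus ennreal_mult)
    with less have "ennreal (\<mu> * s) < ennreal (\<mu> / 2 * s + C)"
      by (rule less_le_trans)
    then have "\<mu> * s < \<mu> / 2 * s + C"
      using \<mu> r s b by (subst (asm) ennreal_less_iff) (auto simp: C_def)
    moreover have "\<mu> * r \<le> \<mu> * s"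
      using \<mu> s by (intro mult_left_mono) auto
    ultimately have "\<mu> * r \<le> 2 * C"
      by linarith
    then show "r \<in> {0<..2 * C / \<mu>}"
      using \<mu> r by (auto simp: field_simps)
  qed
  then have "emeasure lborel {r. ennreal \<mu> < hardy_majorant g r} \<le> emeasure lborel {0<..2 * C / \<mu>}"
    by (rule emeasure_mono) simp
  then show ?thesis
    by (rule le_less_trans) (intro emeasure_bounded_finite bounded_Ioc)
qed

end

lemma hardy_majorant_strong_type:
  fixes g :: "real \<Rightarrow> real" and p :: real
  assumes p: "1 < p" and g_measurable[measurable]: "g \<in> borel_measurable borel" and g_nonneg: "\<And>t. 0 \<le> g t"
  shows "(\<integral>\<^sup>+r. ennreal (enn2real (hardy_majorant g r) powr p) \<partial>lborel)
    \<le> ennreal ((p / (p - 1)) powr p) * (\<integral>\<^sup>+t. ennreal (g t powr p) \<partial>lborel)"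
proof (cases "(\<integral>\<^sup>+t. ennreal (g t powr p) \<partial>lborel) < \<infinity>")
  case True
  have level: "{r \<in> space lborel. t < enn2real (hardy_majorant g r)} = {r. ennreal t < hardy_majorant g r}"
    if "0 < t" for t
  proof -
    have "t < enn2real (hardy_majorant g r) \<longleftrightarrow> ennreal t < hardy_majorant g r" for r
      using hardy_majorant_finite[OF p g_measurable True, of r] that
      by (cases "hardy_majorant g r") (auto simp: ennreal_less_iff)
    then show ?thesis
      by simp
  qed
  have [measurable]: "hardy_majorant g \<in> borel_measurable lborel"
    using hardy_majorant_borel_measurable by simp
  show ?thesis
  proof (rule nn_integral_powr_le_of_weak_type[OF lborel.sigma_finite_measure_axioms p _ _ _ g_nonneg])
    fix t :: real assume t: "0 < t"
    show "ennreal t * emeasure lborel {r \<in> space lborel. t < enn2real (hardy_majorant g r)}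
        \<le> (\<integral>\<^sup>+r\<in>{r \<in> space lborel. t < enn2real (hardy_majorant g r)}. ennreal (g r) \<partial>lborel)"
      unfolding level[OF t] by (rule hardy_majorant_weak_type[OF t])
    show "emeasure lborel {r \<in> space lborel. t < enn2real (hardy_majorant g r)} < \<infinity>"
      unfolding level[OF t] by (rule emeasure_hardy_majorant_level_finite[OF p g_measurable True t])
  qed simp_all
next
  case False
  then have "(\<integral>\<^sup>+t. ennreal (g t powr p) \<partial>lborel) = \<infinity>"
    by (simp add: not_less top_unique)
  then show ?thesis
    using p by (simp add: ennreal_mult_top)
qed

lemma hardy_mean_le_hardy_majorant:
  fixes f g :: "real \<Rightarrow> real"
  assumes r: "0 < r" and s: "0 < s" and dominated: "\<And>t. 0 < t \<Longrightarrow> \<bar>f t\<bar> \<le> g t"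
  shows "ennreal \<bar>min (1 / r) (1 / s) * (\<integral>t\<in>{0<..s}. f t \<partial>lborel)\<bar> \<le> hardy_majorant g r"
proof -
  have "ennreal \<bar>min (1 / r) (1 / s) * (\<integral>t\<in>{0<..s}. f t \<partial>lborel)\<bar>
      = ennreal (min (1 / r) (1 / s)) * ennreal (norm (\<integral>t\<in>{0<..s}. f t \<partial>lborel))"
    using r s by (simp add: abs_mult ennreal_mult)
  also have "\<dots> \<le> ennreal (min (1 / r) (1 / s)) * (\<integral>\<^sup>+t\<in>{0<..s}. ennreal (norm (f t)) \<partial>lborel)"
    by (intro mult_left_mono norm_set_integral_le_set_nn_integral) simp
  also have "\<dots> \<le> ennreal (min (1 / r) (1 / s)) * (\<integral>\<^sup>+t\<in>{0<..s}. ennreal (g t) \<partial>lborel)"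
  proof (intro mult_left_mono nn_integral_mono)
    fix t
    show "ennreal (norm (f t)) * indicator {0<..s} t \<le> ennreal (g t) * indicator {0<..s} t"
      using dominated[of t] by (cases "t \<in> {0<..s}") (auto intro: ennreal_leI)
  qed simp
  also have "\<dots> \<le> hardy_majorant g r"
    by (rule hardy_majorant_upper[OF s])
  finally show ?thesis .
qed

lemma hardy_sup_le_hardy_majorant_powr:
  fixes f g :: "real \<Rightarrow> real" and p r :: real
  assumes p: "0 \<le> p" and r: "0 < r" and finite: "hardy_majorant g r < \<infinity>"
    and dominated: "\<And>t. 0 < t \<Longrightarrow> \<bar>f t\<bar> \<le> g t"
  shows "(SUP s\<in>{0<..}. ennreal (\<bar>min (1 / r) (1 / s) * (\<integral> t\<in>{0<..s}. f t \<partial>lborel)\<bar> powr p))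
    \<le> ennreal (enn2real (hardy_majorant g r) powr p)"
proof (rule SUP_least)
  fix s :: real assume "s \<in> {0<..}"
  then have "ennreal \<bar>min (1 / r) (1 / s) * (\<integral> t\<in>{0<..s}. f t \<partial>lborel)\<bar> \<le> hardy_majorant g r"
    using r dominated by (intro hardy_mean_le_hardy_majorant) auto
  then have "\<bar>min (1 / r) (1 / s) * (\<integral> t\<in>{0<..s}. f t \<partial>lborel)\<bar> \<le> enn2real (hardy_majorant g r)"
    using finite by (cases "hardy_majorant g r") auto
  then show "ennreal (\<bar>min (1 / r) (1 / s) * (\<integral> t\<in>{0<..s}. f t \<partial>lborel)\<bar> powr p)
      \<le> ennreal (enn2real (hardy_majorant g r) powr p)"
    using p by (intro ennreal_leI powr_mono2) auto
qed

theorem theorem2p1: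
  fixes p :: real and f :: "real \<Rightarrow> real"
  assumes p: "1 < p"
    and meas: "set_borel_measurable lborel {0<..} f"
    and Lp: "(\<integral>\<^sup>+ r\<in>{0<..}. ennreal (\<bar>f r\<bar> powr p) \<partial>lborel) < \<infinity>"
  shows "(\<integral>\<^sup>+ r\<in>{0<..}.
            (SUP s\<in>{0<..}. ennreal (\<bar>min (1 / r) (1 / s) * (\<integral> t\<in>{0<..s}. f t \<partial>lborel)\<bar> powr p))
          \<partial>lborel)
         \<le> ennreal ((p / (p - 1)) powr p) * (\<integral>\<^sup>+ r\<in>{0<..}. ennreal (\<bar>f r\<bar> powr p) \<partial>lborel)"
proof -
  define g where "g t = \<bar>indicator {0<..} t * f t\<bar>" for t
  have g_measurable: "g \<in> borel_measurable borel"
    using meas unfolding g_def set_borel_measurable_def by simp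
  have g_Lp: "(\<integral>\<^sup>+t. ennreal (g t powr p) \<partial>lborel) = (\<integral>\<^sup>+ r\<in>{0<..}. ennreal (\<bar>f r\<bar> powr p) \<partial>lborel)"
    using p by (intro nn_integral_cong) (simp add: g_def indicator_def)
  have "(\<integral>\<^sup>+ r\<in>{0<..}.
        (SUP s\<in>{0<..}. ennreal (\<bar>min (1 / r) (1 / s) * (\<integral> t\<in>{0<..s}. f t \<partial>lborel)\<bar> powr p)) \<partial>lborel)
      \<le> (\<integral>\<^sup>+r. ennreal (enn2real (hardy_majorant g r) powr p) \<partial>lborel)"
    using p hardy_majorant_finite[OF p g_measurable] Lp g_Lp
    by (intro nn_integral_mono) (auto simp: indicator_def g_def intro!: hardy_sup_le_hardy_majorant_powr)
  also have "\<dots> \<le> ennreal ((p / (p - 1)) powr p) * (\<integral>\<^sup>+t. ennreal (g t powr p) \<partial>lborel)"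
    by (rule hardy_majorant_strong_type[OF p g_measurable]) (simp add: g_def)
  finally show ?thesis
    unfolding g_Lp .
qed

end
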